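(* Let $X=\{x_1,\ldots,x_n\}$ be a finite set, $d: X\times X\to\mathbb{R}$ a dissimilarity, and $M\subseteq X$ a set of $k\ge 2$ medoids. If $d'$ is an $M$-consistent variant of $d$, then $\tilde{S}(X,d',M)\ge \tilde{S}(X,d,M)$ (consistency of the Average Medoid Silhouette).
   Context: For $x_i\in X$, let $d_1(i)$ denote the distance to the closest medoid in $M$ and $d_2(i)$ the distance to the second closest medoid in $M$ (with respect to the dissimilarity under consideration). The Medoid Silhouette of $x_i$ is $\tilde{s}_i(X,d,M)=1-\frac{d_1(i)}{d_2(i)}$, with the convention $\tilde{s}_i=1$ when $d_1(i)=d_2(i)=0$; the Average Medoid Silhouette is $\tilde{S}(X,d,M)=\frac{1}{n}\sum_{i=1}^n\tilde{s}_i(X,d,M)$. Write $x_i\sim_M x_{i'}$ if $x_i$ and $x_{i'}$ have the same nearest medoid in $M$ (with respect to $d$), and $x_i\not\sim_M x_{i'}$ otherwise. A dissimilarity $d'$ on $X$ is an $M$-consistent variant of $d$ if $d'(x_i,x_{i'})\le d(x_i,x_{i'})$ whenever $x_i\sim_M x_{i'}$, and $d'(x_i,x_{i'})\ge d(x_i,x_{i'})$ whenever $x_i\not\sim_M x_{i'}$. *)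

theory Defs
  imports Complex_Main "HOL-Library.Multiset"
begin

definition dissimilarity_on :: "'a set \<Rightarrow> ('a \<Rightarrow> 'a \<Rightarrow> real) \<Rightarrow> bool" where
  "dissimilarity_on X d \<longleftrightarrow>
     (\<forall>x\<in>X. \<forall>y\<in>X. 0 \<le> d x y \<and> d x y = d y x) \<and> (\<forall>x\<in>X. d x x = 0)"

definition medoid_dists :: "('a \<Rightarrow> 'a \<Rightarrow> real) \<Rightarrow> 'a set \<Rightarrow> 'a \<Rightarrow> real list" where
  "medoid_dists d M x = sorted_list_of_multiset (image_mset (d x) (mset_set M))"

definition dist1 :: "('a \<Rightarrow> 'a \<Rightarrow> real) \<Rightarrow> 'a set \<Rightarrow> 'a \<Rightarrow> real" where
  "dist1 d M x = medoid_dists d M x ! 0"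

definition dist2 :: "('a \<Rightarrow> 'a \<Rightarrow> real) \<Rightarrow> 'a set \<Rightarrow> 'a \<Rightarrow> real" where
  "dist2 d M x = medoid_dists d M x ! 1"

definition medoid_silhouette :: "('a \<Rightarrow> 'a \<Rightarrow> real) \<Rightarrow> 'a set \<Rightarrow> 'a \<Rightarrow> real" where
  "medoid_silhouette d M x =
     (if dist1 d M x = 0 \<and> dist2 d M x = 0 then 1 else 1 - dist1 d M x / dist2 d M x)"

definition avg_medoid_silhouette :: "'a set \<Rightarrow> ('a \<Rightarrow> 'a \<Rightarrow> real) \<Rightarrow> 'a set \<Rightarrow> real" where
  "avg_medoid_silhouette X d M = (\<Sum>x\<in>X. medoid_silhouette d M x) / real (card X)"

definition nearest_medoid_assignment ::
  "'a set \<Rightarrow> ('a \<Rightarrow> 'a \<Rightarrow> real) \<Rightarrow> 'a set \<Rightarrow> ('a \<Rightarrow> 'a) \<Rightarrow> bool" where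
  "nearest_medoid_assignment X d M nm \<longleftrightarrow>
     (\<forall>x\<in>X. nm x \<in> M \<and> (\<forall>m\<in>M. d x (nm x) \<le> d x m)) \<and> (\<forall>m\<in>M. nm m = m)"

definition same_medoid :: "('a \<Rightarrow> 'a) \<Rightarrow> 'a \<Rightarrow> 'a \<Rightarrow> bool" where
  "same_medoid nm x y \<longleftrightarrow> nm x = nm y"

definition M_consistent_variant ::
  "'a set \<Rightarrow> ('a \<Rightarrow> 'a) \<Rightarrow> ('a \<Rightarrow> 'a \<Rightarrow> real) \<Rightarrow> ('a \<Rightarrow> 'a \<Rightarrow> real) \<Rightarrow> bool" where
  "M_consistent_variant X nm d d' \<longleftrightarrow>
     (\<forall>x\<in>X. \<forall>y\<in>X.
        (same_medoid nm x y \<longrightarrow> d' x y \<le> d x y) \<and>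
        (\<not> same_medoid nm x y \<longrightarrow> d' x y \<ge> d x y))"

end

theory Submission
  imports Defs
begin

text \<open>Fix x with nearest medoid m. Since m lies in the cluster of x, d' x m \<le> d x m, so the
  distance to the nearest medoid can only shrink. Every other medoid is its own nearest medoid,
  hence lies in a different cluster than x, so its distance can only grow; as the second-nearest
  distance under d is the minimum over M - {m}, and the second-nearest distance under d' is at
  least that minimum (whichever medoid is nearest under d'), it can only grow as well. Thus
  1 - d1/d2 increases at every point, and so does the average.\<close>

lemma card_ge_2_imp_Diff_singleton_nonempty:
  assumes "card M \<ge> 2"
  shows "M - {m} \<noteq> {}"
proof
  assume "M - {m} = {}"
  then have "M \<subseteq> {m}" by blast
  then have "card M \<le> 1"
    using card_mono[of "{m}" M] by simp
  with assms show False by simp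
qed

lemma sorted_list_of_multiset_nth_0:
  fixes A :: "'b::linorder multiset"
  assumes "A \<noteq> {#}"
  shows "sorted_list_of_multiset A ! 0 = Min_mset A"
proof -
  let ?L = "sorted_list_of_multiset A"
  have "?L \<noteq> []"
    using assms by (metis mset_sorted_list_of_multiset mset_zero_iff)
  then have "?L ! 0 \<in> set_mset A" and "\<forall>y\<in>set_mset A. ?L ! 0 \<le> y"
    by (auto simp flip: set_sorted_list_of_multiset simp: in_set_conv_nth sorted_nth_mono)
  then show ?thesis
    by (intro Min_eqI[symmetric]) auto
qed

lemma sorted_list_of_multiset_image_mset_remove_min:
  fixes g :: "'a \<Rightarrow> 'b::linorder"
  assumes "finite M" "m \<in> M" "\<forall>m'\<in>M. g m \<le> g m'"
  shows "sorted_list_of_multiset (image_mset g (mset_set M))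
           = g m # sorted_list_of_multiset (image_mset g (mset_set (M - {m})))"
proof -
  have "mset_set M = add_mset m (mset_set (M - {m}))"
    using assms(1,2) by (simp add: mset_set.remove)
  moreover have "\<forall>y\<in>set (sorted_list_of_multiset (image_mset g (mset_set (M - {m})))). g m \<le> y"
    using assms by (auto dest: elem_mset_set[THEN iffD1, rotated])
  ultimately show ?thesis
    by (simp add: insort_is_Cons)
qed

lemma dist1_eq_Min:
  assumes "finite M" "M \<noteq> {}"
  shows "dist1 d M x = Min (d x ` M)"
  using assms
  by (simp add: dist1_def medoid_dists_def sorted_list_of_multiset_nth_0 mset_set_empty_iff)

lemma dist2_eq_dist1_remove_nearest:
  assumes "finite M" "m \<in> M" "\<forall>m'\<in>M. d x m \<le> d x m'"
  shows "dist2 d M x = dist1 d (M - {m}) x"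
  using sorted_list_of_multiset_image_mset_remove_min[OF assms]
  by (simp add: dist1_def dist2_def medoid_dists_def)

lemma Min_remove_le_dist2:
  assumes "finite M" "card M \<ge> 2" "m \<in> M"
  shows "Min (d x ` (M - {m})) \<le> dist2 d M x"
proof -
  define m1 where "m1 = arg_min_on (d x) M"
  have "M - {m1} \<noteq> {}"
    using assms(2) by (rule card_ge_2_imp_Diff_singleton_nonempty)
  moreover have "M \<noteq> {}"
    using assms(3) by blast
  ultimately have m1: "m1 \<in> M" "\<forall>m'\<in>M. d x m1 \<le> d x m'"
    unfolding m1_def using assms(1) by (auto intro: arg_min_if_finite arg_min_least)
  have "Min (d x ` (M - {m})) \<le> d x m'" if "m' \<in> M - {m1}" for m'
  proof (cases "m' = m")
    case True
    then have "Min (d x ` (M - {m})) \<le> d x m1"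
      using assms(1) m1(1) that by (intro Min_le) auto
    with True m1(2) assms(3) show ?thesis by fastforce
  next
    case False
    then show ?thesis using assms(1) that by (intro Min_le) auto
  qed
  then have "Min (d x ` (M - {m})) \<le> Min (d x ` (M - {m1}))"
    using assms(1) \<open>M - {m1} \<noteq> {}\<close> by (intro Min.boundedI) auto
  also have "\<dots> = dist2 d M x"
    using assms(1) \<open>M - {m1} \<noteq> {}\<close> m1
    by (simp add: dist2_eq_dist1_remove_nearest dist1_eq_Min)
  finally show ?thesis .
qed

lemma dist1_le_dist2:
  assumes "finite M" "card M \<ge> 2"
  shows "dist1 d M x \<le> dist2 d M x"
proof -
  obtain m where "m \<in> M"
    using card_ge_2_imp_Diff_singleton_nonempty[OF assms(2)] by blast
  have "dist1 d M x = Min (d x ` M)"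
    using assms \<open>m \<in> M\<close> by (intro dist1_eq_Min) auto
  also have "\<dots> \<le> Min (d x ` (M - {m}))"
    using assms(1) card_ge_2_imp_Diff_singleton_nonempty[OF assms(2)] by (intro Min_antimono) auto
  also have "\<dots> \<le> dist2 d M x"
    using assms \<open>m \<in> M\<close> by (rule Min_remove_le_dist2)
  finally show ?thesis .
qed

lemma medoid_silhouette_mono:
  assumes "0 \<le> dist1 d' M x" "dist1 d' M x \<le> dist1 d M x"
    and "dist1 d M x \<le> dist2 d M x" "dist2 d M x \<le> dist2 d' M x"
  shows "medoid_silhouette d M x \<le> medoid_silhouette d' M x"
proof (cases "dist2 d M x = 0")
  case True
  then have "dist1 d M x = 0" "dist1 d' M x = 0"
    using assms by linarith+
  with True show ?thesis by (simp add: medoid_silhouette_def)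
next
  case False
  then have "dist1 d' M x / dist2 d' M x \<le> dist1 d M x / dist2 d M x"
    using assms by (intro frac_le) auto
  then show ?thesis using assms False by (auto simp: medoid_silhouette_def)
qed

lemma medoid_silhouette_le_consistent_variant:
  assumes "finite X" "M \<subseteq> X" "card M \<ge> 2"
    and "dissimilarity_on X d'"
    and "nearest_medoid_assignment X d M nm"
    and "M_consistent_variant X nm d d'"
    and "x \<in> X"
  shows "medoid_silhouette d M x \<le> medoid_silhouette d' M x"
proof -
  have "finite M"
    using assms(1,2) by (rule finite_subset[rotated])
  have "M - {nm x} \<noteq> {}"
    using assms(3) by (rule card_ge_2_imp_Diff_singleton_nonempty)
  then have "M \<noteq> {}"
    by blast
  have nearest: "nm x \<in> M" "\<forall>m\<in>M. d x (nm x) \<le> d x m" and fixed: "\<forall>m\<in>M. nm m = m"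
    using assms(5,7) by (auto simp: nearest_medoid_assignment_def)
  have closer: "d' x (nm x) \<le> d x (nm x)" and farther: "\<forall>m\<in>M - {nm x}. d x m \<le> d' x m"
    using assms(2,6,7) nearest(1) fixed
    by (fastforce simp: M_consistent_variant_def same_medoid_def)+
  have "0 \<le> dist1 d' M x"
    using assms(2,4,7) \<open>finite M\<close> \<open>M \<noteq> {}\<close>
    by (auto simp: dist1_eq_Min dissimilarity_on_def)
  moreover have "dist1 d' M x \<le> dist1 d M x"
  proof -
    have "dist1 d' M x \<le> d' x (nm x)"
      using \<open>finite M\<close> \<open>M \<noteq> {}\<close> nearest(1) by (simp add: dist1_eq_Min)
    also have "\<dots> \<le> d x (nm x)"
      by (fact closer)
    also have "\<dots> = dist1 d M x"
      using \<open>finite M\<close> \<open>M \<noteq> {}\<close> nearest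
      by (simp add: dist1_eq_Min) (intro Min_eqI[symmetric], auto)
    finally show ?thesis .
  qed
  moreover have "dist1 d M x \<le> dist2 d M x"
    using \<open>finite M\<close> assms(3) by (rule dist1_le_dist2)
  moreover have "dist2 d M x \<le> dist2 d' M x"
  proof -
    have "dist2 d M x = Min (d x ` (M - {nm x}))"
      using \<open>finite M\<close> \<open>M - {nm x} \<noteq> {}\<close> nearest
      by (simp add: dist2_eq_dist1_remove_nearest dist1_eq_Min)
    also have "\<dots> \<le> Min (d' x ` (M - {nm x}))"
      using \<open>finite M\<close> \<open>M - {nm x} \<noteq> {}\<close> farther
      by (intro Min.boundedI) (auto intro: order.trans[OF Min_le])
    also have "\<dots> \<le> dist2 d' M x"
      using \<open>finite M\<close> assms(3) nearest(1) by (rule Min_remove_le_dist2)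
    finally show ?thesis .
  qed
  ultimately show ?thesis
    by (rule medoid_silhouette_mono)
qed

theorem theorem2:
  fixes X M :: "'a set" and d d' :: "'a \<Rightarrow> 'a \<Rightarrow> real" and nm :: "'a \<Rightarrow> 'a"
  assumes "finite X"
    and "M \<subseteq> X"
    and "card M \<ge> 2"
    and "dissimilarity_on X d"
    and "dissimilarity_on X d'"
    and "nearest_medoid_assignment X d M nm"
    and "M_consistent_variant X nm d d'"
  shows "avg_medoid_silhouette X d' M \<ge> avg_medoid_silhouette X d M"
proof -
  have "(\<Sum>x\<in>X. medoid_silhouette d M x) \<le> (\<Sum>x\<in>X. medoid_silhouette d' M x)"
    using medoid_silhouette_le_consistent_variant[OF assms(1-3,5-7)] by (rule sum_mono)
  then show ?thesis
    unfolding avg_medoid_silhouette_def by (rule divide_right_mono) simp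
qed

end
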